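(* Let $P$ be a minuscule poset. Then $\sum_{p\in P}\mathbb{1}_p\equiv \frac{\#P}{2}$.
   Context: Minuscule posets are the posets attached to a simple Lie algebra (Dynkin diagram) together with a minuscule node (the poset of join-irreducible elements of the corresponding minuscule weight lattice / Bruhat order on $W/W_J$). Up to isomorphism they are: the rectangles $[a]\times[b]$ (product order); the shifted staircases $\{(i,j)\colon1\le i\le j\le n\}$ with componentwise order; the double-tailed diamonds $d_n(1)$ for $n\ge2$, consisting of a chain $x_1<\dots<x_{n-1}$, two incomparable elements $y_1,y_2$, and a chain $z_{n-1}<\dots<z_1$ with $x_i<y_j<z_k$ for all $i,j,k$; and the two exceptional minuscule posets $\Lambda_{E_6}$ (16 elements) and $\Lambda_{E_7}$ (27 elements) of types $E_6$ and $E_7$. $\mathcal{J}(P)$ is the set of order ideals of $P$. For $x\in P$, $I\in\mathcal{J}(P)$: $\mathbb{1}_x(I)=1$ if $x\in I$, else $0$; $T_x^+(I)=1$ if $x$ is a minimal element of $P\setminus I$, else $0$; $T_x^-(I)=1$ if $x$ is a maximal element of $I$, else $0$; $T_x=T_x^+-T_x^-$. For $f,g\colon\mathcal{J}(P)\to\mathbb{R}$, $f\equiv g$ means $f-g=\sum_{x\in P}c_xT_x$ for some real constants $c_x$; a real number denotes the corresponding constant function. *)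

theory Defs
  imports Complex_Main
begin

definition order_ideals :: "'a set \<Rightarrow> ('a \<Rightarrow> 'a \<Rightarrow> bool) \<Rightarrow> 'a set set" where
  "order_ideals P le = {I. I \<subseteq> P \<and> (\<forall>x\<in>I. \<forall>y\<in>P. le y x \<longrightarrow> y \<in> I)}"

definition ind :: "'a \<Rightarrow> 'a set \<Rightarrow> real" where
  "ind x I = (if x \<in> I then 1 else 0)"

definition Tplus :: "'a set \<Rightarrow> ('a \<Rightarrow> 'a \<Rightarrow> bool) \<Rightarrow> 'a \<Rightarrow> 'a set \<Rightarrow> real" where
  "Tplus P le x I = (if x \<in> P - I \<and> (\<forall>y\<in>P - I. le y x \<longrightarrow> y = x) then 1 else 0)"

definition Tminus :: "'a set \<Rightarrow> ('a \<Rightarrow> 'a \<Rightarrow> bool) \<Rightarrow> 'a \<Rightarrow> 'a set \<Rightarrow> real" where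
  "Tminus P le x I = (if x \<in> I \<and> (\<forall>y\<in>I. le x y \<longrightarrow> y = x) then 1 else 0)"

definition Tog :: "'a set \<Rightarrow> ('a \<Rightarrow> 'a \<Rightarrow> bool) \<Rightarrow> 'a \<Rightarrow> 'a set \<Rightarrow> real" where
  "Tog P le x I = Tplus P le x I - Tminus P le x I"

text \<open>f \<equiv> g on J(P): f - g is a real linear combination of the toggleability statistics T_x.\<close>
definition toggle_equiv :: "'a set \<Rightarrow> ('a \<Rightarrow> 'a \<Rightarrow> bool) \<Rightarrow> ('a set \<Rightarrow> real) \<Rightarrow> ('a set \<Rightarrow> real) \<Rightarrow> bool" where
  "toggle_equiv P le f g \<longleftrightarrow>
     (\<exists>c :: 'a \<Rightarrow> real. \<forall>I \<in> order_ideals P le. f I - g I = (\<Sum>x\<in>P. c x * Tog P le x I))"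

definition order_iso :: "'a set \<Rightarrow> ('a \<Rightarrow> 'a \<Rightarrow> bool) \<Rightarrow> 'b set \<Rightarrow> ('b \<Rightarrow> 'b \<Rightarrow> bool) \<Rightarrow> ('a \<Rightarrow> 'b) \<Rightarrow> bool" where
  "order_iso P le Q le' f \<longleftrightarrow> bij_betw f P Q \<and> (\<forall>x\<in>P. \<forall>y\<in>P. le x y \<longleftrightarrow> le' (f x) (f y))"

definition isomorphic_posets :: "'a set \<Rightarrow> ('a \<Rightarrow> 'a \<Rightarrow> bool) \<Rightarrow> 'b set \<Rightarrow> ('b \<Rightarrow> 'b \<Rightarrow> bool) \<Rightarrow> bool" where
  "isomorphic_posets P le Q le' \<longleftrightarrow> (\<exists>f. order_iso P le Q le' f)"

definition prod_le :: "nat \<times> nat \<Rightarrow> nat \<times> nat \<Rightarrow> bool" where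
  "prod_le p q \<longleftrightarrow> fst p \<le> fst q \<and> snd p \<le> snd q"

definition rect :: "nat \<Rightarrow> nat \<Rightarrow> (nat \<times> nat) set" where
  "rect a b = {(i, j). 1 \<le> i \<and> i \<le> a \<and> 1 \<le> j \<and> j \<le> b}"

definition staircase :: "nat \<Rightarrow> (nat \<times> nat) set" where
  "staircase n = {(i, j). 1 \<le> i \<and> i \<le> j \<and> j \<le> n}"

text \<open>Double-tailed diamond d_n(1): x_i = (0,i), y_j = (1,j), z_k = (2,k).\<close>
definition diamond :: "nat \<Rightarrow> (nat \<times> nat) set" where
  "diamond n = {(0, i) | i. 1 \<le> i \<and> i \<le> n - 1} \<union> {(1, 1), (1, 2)}
              \<union> {(2, k) | k. 1 \<le> k \<and> k \<le> n - 1}"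

definition diamond_le :: "nat \<times> nat \<Rightarrow> nat \<times> nat \<Rightarrow> bool" where
  "diamond_le p q \<longleftrightarrow> fst p < fst q
     \<or> (fst p = 0 \<and> fst q = 0 \<and> snd p \<le> snd q)
     \<or> (fst p = 1 \<and> fst q = 1 \<and> snd p = snd q)
     \<or> (fst p = 2 \<and> fst q = 2 \<and> snd q \<le> snd p)"

text \<open>Exceptional minuscule posets, realized as the positive roots whose coefficient
  at the minuscule node is 1 (Bourbaki labelling; E6: node 1, E7: node 7),
  written in the basis of simple roots and ordered componentwise (root order).\<close>
definition root_le :: "int list \<Rightarrow> int list \<Rightarrow> bool" where
  "root_le xs ys \<longleftrightarrow> list_all2 (\<le>) xs ys"

definition LambdaE6 :: "int list set" where
  "LambdaE6 = {
   [1,0,0,0,0,0],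
   [1,0,1,0,0,0],
   [1,0,1,1,0,0],
   [1,0,1,1,1,0],
   [1,0,1,1,1,1],
   [1,1,1,1,0,0],
   [1,1,1,1,1,0],
   [1,1,1,1,1,1],
   [1,1,1,2,1,0],
   [1,1,1,2,1,1],
   [1,1,1,2,2,1],
   [1,1,2,2,1,0],
   [1,1,2,2,1,1],
   [1,1,2,2,2,1],
   [1,1,2,3,2,1],
   [1,2,2,3,2,1]}"

definition LambdaE7 :: "int list set" where
  "LambdaE7 = {
   [0,0,0,0,0,0,1],
   [0,0,0,0,0,1,1],
   [0,0,0,0,1,1,1],
   [0,0,0,1,1,1,1],
   [0,0,1,1,1,1,1],
   [0,1,0,1,1,1,1],
   [0,1,1,1,1,1,1],
   [0,1,1,2,1,1,1],
   [0,1,1,2,2,1,1],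
   [0,1,1,2,2,2,1],
   [1,0,1,1,1,1,1],
   [1,1,1,1,1,1,1],
   [1,1,1,2,1,1,1],
   [1,1,1,2,2,1,1],
   [1,1,1,2,2,2,1],
   [1,1,2,2,1,1,1],
   [1,1,2,2,2,1,1],
   [1,1,2,2,2,2,1],
   [1,1,2,3,2,1,1],
   [1,1,2,3,2,2,1],
   [1,1,2,3,3,2,1],
   [1,2,2,3,2,1,1],
   [1,2,2,3,2,2,1],
   [1,2,2,3,3,2,1],
   [1,2,2,4,3,2,1],
   [1,2,3,4,3,2,1],
   [2,2,3,4,3,2,1]}"

definition minuscule_poset :: "'a set \<Rightarrow> ('a \<Rightarrow> 'a \<Rightarrow> bool) \<Rightarrow> bool" where
  "minuscule_poset P le \<longleftrightarrow>
     (\<exists>a b. 1 \<le> a \<and> 1 \<le> b \<and> isomorphic_posets P le (rect a b) prod_le)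
   \<or> (\<exists>n. 1 \<le> n \<and> isomorphic_posets P le (staircase n) prod_le)
   \<or> (\<exists>n. 2 \<le> n \<and> isomorphic_posets P le (diamond n) diamond_le)
   \<or> isomorphic_posets P le LambdaE6 root_le
   \<or> isomorphic_posets P le LambdaE7 root_le"

end

theory Submission
  imports Defs
begin

(* Fix real coefficients c and put F(I) = sum of c x * T_x(I) over x in P. When an element x that
   is minimal in P - I is added to the order ideal I, T_x drops by 2, and T_y rises by 1 exactly for
   the lower covers y of x that were maximal in I and for the upper covers y of x that become minimal
   in the complement; every other T_y is unchanged. Hence #I - #P/2 = F(I) on all order ideals as
   soon as F({}) = -#P/2 and every such increment equals 1. For rectangles and shifted staircases c
   is a quadratic in the content i - j, for double-tailed diamonds a quadratic in the rank, and the
   increment condition becomes a second-difference identity; for the two exceptional posets an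
   explicit c is checked on all 27 resp. 56 order ideals. Invariance under isomorphism then covers
   every minuscule poset. *)

abbreviation sum_ind_equiv_half_card :: "'a set \<Rightarrow> ('a \<Rightarrow> 'a \<Rightarrow> bool) \<Rightarrow> bool" where
  "sum_ind_equiv_half_card P le \<equiv>
     toggle_equiv P le (\<lambda>I. \<Sum>p\<in>P. ind p I) (\<lambda>I. real (card P) / 2)"

definition maximal_in :: "('a \<Rightarrow> 'a \<Rightarrow> bool) \<Rightarrow> 'a set \<Rightarrow> 'a \<Rightarrow> bool" where
  "maximal_in le A y \<longleftrightarrow> y \<in> A \<and> (\<forall>z\<in>A. le y z \<longrightarrow> z = y)"

definition minimal_in :: "('a \<Rightarrow> 'a \<Rightarrow> bool) \<Rightarrow> 'a set \<Rightarrow> 'a \<Rightarrow> bool" where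
  "minimal_in le A y \<longleftrightarrow> y \<in> A \<and> (\<forall>z\<in>A. le z y \<longrightarrow> z = y)"

definition covers :: "'a set \<Rightarrow> ('a \<Rightarrow> 'a \<Rightarrow> bool) \<Rightarrow> 'a \<Rightarrow> 'a \<Rightarrow> bool" where
  "covers P le y x \<longleftrightarrow>
     y \<in> P \<and> x \<in> P \<and> le y x \<and> y \<noteq> x \<and> (\<forall>z\<in>P. le y z \<longrightarrow> le z x \<longrightarrow> z = y \<or> z = x)"

lemma order_ideals_subset: "I \<in> order_ideals P le \<Longrightarrow> I \<subseteq> P"
  by (simp add: order_ideals_def)

lemma order_ideals_downward: "I \<in> order_ideals P le \<Longrightarrow> x \<in> I \<Longrightarrow> y \<in> P \<Longrightarrow> le y x \<Longrightarrow> y \<in> I"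
  by (auto simp: order_ideals_def)

lemma insert_minimal_order_ideal:
  assumes I: "I \<in> order_ideals P le" and x: "minimal_in le (P - I) x"
  shows "insert x I \<in> order_ideals P le"
  using x order_ideals_subset[OF I] order_ideals_downward[OF I]
  by (auto simp: order_ideals_def minimal_in_def)

lemma remove_maximal_order_ideal:
  assumes I: "I \<in> order_ideals P le" and x: "maximal_in le I x"
  shows "I - {x} \<in> order_ideals P le" and "minimal_in le (P - (I - {x})) x"
  using x order_ideals_subset[OF I] order_ideals_downward[OF I]
  by (auto simp: order_ideals_def minimal_in_def maximal_in_def)

lemma sum_ind_eq_card:
  assumes "finite P" and "I \<subseteq> P"
  shows "(\<Sum>p\<in>P. ind p I) = real (card I)"
  using assms by (simp add: ind_def sum.If_cases Int_absorb1)

lemma sum_mult_of_bool: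
  fixes c :: "'a \<Rightarrow> real"
  assumes "finite A" and "\<And>y. Q y \<Longrightarrow> y \<in> A"
  shows "(\<Sum>y\<in>A. c y * of_bool (Q y)) = sum c {y. Q y}"
proof -
  have "(\<Sum>y\<in>A. c y * of_bool (Q y)) = (\<Sum>y\<in>A. if Q y then c y else 0)"
    by (intro sum.cong) auto
  also have "\<dots> = sum c {y \<in> A. Q y}" using assms(1) by (simp add: sum.inter_filter)
  also have "{y \<in> A. Q y} = {y. Q y}" using assms(2) by blast
  finally show ?thesis .
qed

lemma sum_two_points:
  fixes c :: "'a \<Rightarrow> real"
  assumes "a \<noteq> b"
  shows "sum c {y. y = a \<and> A \<or> y = b \<and> B} = of_bool A * c a + of_bool B * c b"
proof -
  have "{y. y = a \<and> A \<or> y = b \<and> B} = (if A then {a} else {}) \<union> (if B then {b} else {})"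
    by auto
  then show ?thesis using assms by (simp add: sum.union_disjoint)
qed

lemma Tog_eq_of_bool: "Tog P le x I = of_bool (minimal_in le (P - I) x) - of_bool (maximal_in le I x)"
  by (simp add: Tog_def Tplus_def Tminus_def minimal_in_def maximal_in_def)

section \<open>Transfer along order isomorphisms\<close>

lemma order_iso_the_inv_into:
  assumes "order_iso P le Q le' f"
  shows "order_iso Q le' P le (the_inv_into P f)"
proof -
  have bij: "bij_betw f P Q" and mono: "\<forall>x\<in>P. \<forall>y\<in>P. le x y \<longleftrightarrow> le' (f x) (f y)"
    using assms by (auto simp: order_iso_def)
  have "le' x y \<longleftrightarrow> le (the_inv_into P f x) (the_inv_into P f y)" if "x \<in> Q" "y \<in> Q" for x y
    using that bij mono bij_betw_the_inv_into[OF bij]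
    by (auto simp: bij_betw_def f_the_inv_into_f the_inv_into_into)
  then show ?thesis
    using bij_betw_the_inv_into[OF bij] by (simp add: order_iso_def)
qed

context
  fixes P le Q le' f
  assumes iso: "order_iso P le Q le' f"
begin

private lemma iso_inj: "inj_on f P" and iso_image: "f ` P = Q"
  and iso_le_iff: "x \<in> P \<Longrightarrow> y \<in> P \<Longrightarrow> le' (f x) (f y) \<longleftrightarrow> le x y"
  using iso by (auto simp: order_iso_def bij_betw_def)

lemma order_iso_image_order_ideal:
  assumes I: "I \<in> order_ideals P le"
  shows "f ` I \<in> order_ideals Q le'"
proof -
  have "f ` I \<subseteq> Q" using order_ideals_subset[OF I] iso_image by blast
  moreover have "y \<in> f ` I" if "x \<in> I" "y \<in> Q" "le' y (f x)" for x y
  proof -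
    obtain z where "z \<in> P" "y = f z" using \<open>y \<in> Q\<close> iso_image by blast
    then show ?thesis
      using that I order_ideals_downward[OF I] order_ideals_subset[OF I] iso_le_iff by blast
  qed
  ultimately show ?thesis by (auto simp: order_ideals_def)
qed

lemma Tog_order_iso:
  assumes "I \<subseteq> P" and "x \<in> P"
  shows "Tog Q le' (f x) (f ` I) = Tog P le x I"
proof -
  have mem: "f z \<in> f ` I \<longleftrightarrow> z \<in> I" if "z \<in> P" for z
    using that assms iso_inj by (auto dest: inj_onD)
  have "Q - f ` I = f ` (P - I)" using iso_inj assms iso_image by (simp add: inj_on_image_set_diff)
  then have "minimal_in le' (Q - f ` I) (f x) \<longleftrightarrow> minimal_in le (P - I) x"
    using assms mem iso_le_iff by (auto simp: minimal_in_def inj_on_eq_iff[OF iso_inj])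
  moreover have "maximal_in le' (f ` I) (f x) \<longleftrightarrow> maximal_in le I x"
    using assms mem iso_le_iff by (auto simp: maximal_in_def inj_on_eq_iff[OF iso_inj] subset_iff)
  ultimately show ?thesis by (simp add: Tog_eq_of_bool)
qed

lemma sum_ind_equiv_half_card_order_iso:
  assumes "finite Q" and "sum_ind_equiv_half_card Q le'"
  shows "sum_ind_equiv_half_card P le"
proof -
  have fin: "finite P" using assms(1) iso_image finite_image_iff[OF iso_inj] by simp
  have card: "card P = card Q" using iso_image card_image[OF iso_inj] by simp
  obtain c where c: "\<And>J. J \<in> order_ideals Q le' \<Longrightarrow>
      (\<Sum>p\<in>Q. ind p J) - real (card Q) / 2 = (\<Sum>y\<in>Q. c y * Tog Q le' y J)"
    using assms(2) by (auto simp: toggle_equiv_def)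
  have key: "(\<Sum>p\<in>P. ind p I) - real (card P) / 2 = (\<Sum>x\<in>P. c (f x) * Tog P le x I)"
    if I: "I \<in> order_ideals P le" for I
  proof -
    have IP: "I \<subseteq> P" using order_ideals_subset[OF I] .
    have fI: "f ` I \<in> order_ideals Q le'" using order_iso_image_order_ideal[OF I] .
    have "(\<Sum>p\<in>P. ind p I) - real (card P) / 2 = (\<Sum>p\<in>Q. ind p (f ` I)) - real (card Q) / 2"
      using sum_ind_eq_card[OF fin IP] sum_ind_eq_card[OF assms(1) order_ideals_subset[OF fI]]
        card card_image[OF inj_on_subset[OF iso_inj IP]] by simp
    also have "\<dots> = (\<Sum>y\<in>Q. c y * Tog Q le' y (f ` I))" using c[OF fI] .
    also have "\<dots> = (\<Sum>x\<in>P. c (f x) * Tog Q le' (f x) (f ` I))"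
      using sum.reindex[OF iso_inj, of "\<lambda>y. c y * Tog Q le' y (f ` I)"] iso_image by simp
    also have "\<dots> = (\<Sum>x\<in>P. c (f x) * Tog P le x I)" using Tog_order_iso[OF IP] by simp
    finally show ?thesis .
  qed
  show ?thesis unfolding toggle_equiv_def by (intro exI[of _ "\<lambda>x. c (f x)"] ballI) (erule key)
qed

end

lemma sum_ind_equiv_half_card_isomorphic:
  assumes "isomorphic_posets P le Q le'" and "finite Q" and "sum_ind_equiv_half_card Q le'"
  shows "sum_ind_equiv_half_card P le"
  using assms sum_ind_equiv_half_card_order_iso unfolding isomorphic_posets_def by blast

section \<open>Finite posets and covers\<close>

(* Lists the order ideals inside the prefixes of a linear extension xs, given the lower covers
   lc x of each element x. *)
definition ideals_along :: "('a \<Rightarrow> 'a list) \<Rightarrow> 'a list \<Rightarrow> 'a set list" where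
  "ideals_along lc xs =
     fold (\<lambda>x Is. Is @ map (insert x) (filter (\<lambda>I. set (lc x) \<subseteq> I) Is)) xs [{}]"

lemma lower_covers_eqI:
  assumes "\<And>x y. x \<in> P \<Longrightarrow> y \<in> set (lc x) \<Longrightarrow> covers P le y x"
    and "\<And>x y. x \<in> P \<Longrightarrow> y \<in> P \<Longrightarrow> le y x \<Longrightarrow> y \<noteq> x \<Longrightarrow> \<exists>w\<in>set (lc x). le y w"
    and "x \<in> P"
  shows "set (lc x) = {y. covers P le y x}"
proof (intro equalityI subsetI)
  fix y assume "y \<in> {y. covers P le y x}"
  then have y: "covers P le y x" by simp
  then obtain w where "w \<in> set (lc x)" "le y w"
    using assms(2)[OF assms(3)] by (auto simp: covers_def)
  moreover have "covers P le w x" using assms(1,3) \<open>w \<in> set (lc x)\<close> .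
  ultimately show "y \<in> set (lc x)" using y by (metis covers_def)
qed (use assms(1,3) in blast)

locale finite_poset =
  fixes P :: "'a set" and le :: "'a \<Rightarrow> 'a \<Rightarrow> bool"
  assumes finite: "finite P"
    and refl: "reflp_on P le"
    and trans: "transp_on P le"
    and antisym: "antisymp_on P le"
begin

lemma strict_asymp_on: "asymp_on A (\<lambda>x y. le x y \<and> x \<noteq> y)" if "A \<subseteq> P"
  using antisym that by (auto simp: asymp_on_def antisymp_on_def)

lemma strict_transp_on: "transp_on A (\<lambda>x y. le x y \<and> x \<noteq> y)" if "A \<subseteq> P"
  using trans antisym that unfolding transp_on_def antisymp_on_def by blast

lemma exists_maximal_in:
  assumes "A \<subseteq> P" and "A \<noteq> {}"
  shows "\<exists>y. maximal_in le A y"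
  using Finite_Set.bex_max_element[OF finite_subset[OF assms(1) finite]
      strict_asymp_on[OF assms(1)] strict_transp_on[OF assms(1)] assms(2)]
  by (auto simp: maximal_in_def)

lemma exists_minimal_in:
  assumes "A \<subseteq> P" and "A \<noteq> {}"
  shows "\<exists>y. minimal_in le A y"
  using Finite_Set.bex_min_element[OF finite_subset[OF assms(1) finite]
      strict_asymp_on[OF assms(1)] strict_transp_on[OF assms(1)] assms(2)]
  by (auto simp: minimal_in_def)

lemma exists_cover_above:
  assumes "y \<in> P" "z \<in> P" "le y z" "y \<noteq> z"
  shows "\<exists>w. covers P le y w \<and> le w z"
proof -
  let ?A = "{w \<in> P. le y w \<and> w \<noteq> y \<and> le w z}"
  have "z \<in> ?A" using assms reflp_onD[OF refl] by simp
  then obtain w where "minimal_in le ?A w" using exists_minimal_in[of ?A] by blast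
  then have w: "w \<in> ?A" and least: "\<And>v. v \<in> ?A \<Longrightarrow> le v w \<Longrightarrow> v = w"
    unfolding minimal_in_def by blast+
  have "v = y \<or> v = w" if "v \<in> P" "le y v" "le v w" for v
  proof (cases "v = y")
    case False
    then have "v \<in> ?A" using that w assms(2) transp_onD[OF trans, of v w z] by simp
    then show ?thesis using least that(3) by blast
  qed simp
  then show ?thesis using w assms(1) by (auto simp: covers_def)
qed

lemma exists_cover_below:
  assumes "y \<in> P" "z \<in> P" "le y z" "y \<noteq> z"
  shows "\<exists>w. le y w \<and> covers P le w z"
proof -
  let ?A = "{w \<in> P. le y w \<and> w \<noteq> z \<and> le w z}"
  have "y \<in> ?A" using assms reflp_onD[OF refl] by simp
  then obtain w where "maximal_in le ?A w" using exists_maximal_in[of ?A] by blast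
  then have w: "w \<in> ?A" and greatest: "\<And>v. v \<in> ?A \<Longrightarrow> le w v \<Longrightarrow> v = w"
    unfolding maximal_in_def by blast+
  have "v = w \<or> v = z" if "v \<in> P" "le w v" "le v z" for v
  proof (cases "v = z")
    case False
    then have "v \<in> ?A" using that w assms(1) transp_onD[OF trans, of y w v] by simp
    then show ?thesis using greatest that(2) by blast
  qed simp
  then show ?thesis using w assms(2) by (auto simp: covers_def)
qed

context
  fixes I assumes I: "I \<in> order_ideals P le"
begin

lemma minimal_in_complement_iff_covers:
  assumes "y \<in> P"
  shows "minimal_in le (P - I) y \<longleftrightarrow> y \<notin> I \<and> (\<forall>z. covers P le z y \<longrightarrow> z \<in> I)"
proof
  assume "minimal_in le (P - I) y"
  then show "y \<notin> I \<and> (\<forall>z. covers P le z y \<longrightarrow> z \<in> I)"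
    by (auto simp: minimal_in_def covers_def)
next
  assume y: "y \<notin> I \<and> (\<forall>z. covers P le z y \<longrightarrow> z \<in> I)"
  have "z = y" if z: "z \<in> P - I" "le z y" for z
  proof (rule ccontr)
    assume "z \<noteq> y"
    then obtain w where "le z w" "covers P le w y"
      using exists_cover_below z assms by blast
    then show False
      using y z order_ideals_downward[OF I] by (auto simp: covers_def)
  qed
  then show "minimal_in le (P - I) y" using y assms by (auto simp: minimal_in_def)
qed

lemma maximal_in_iff_covers:
  "maximal_in le I y \<longleftrightarrow> y \<in> I \<and> (\<forall>z. covers P le y z \<longrightarrow> z \<notin> I)"
proof
  assume "maximal_in le I y"
  then show "y \<in> I \<and> (\<forall>z. covers P le y z \<longrightarrow> z \<notin> I)"
    by (auto simp: maximal_in_def covers_def)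
next
  assume y: "y \<in> I \<and> (\<forall>z. covers P le y z \<longrightarrow> z \<notin> I)"
  have "z = y" if z: "z \<in> I" "le y z" for z
  proof (rule ccontr)
    assume "z \<noteq> y"
    then obtain w where "covers P le y w" "le w z"
      using exists_cover_above z y order_ideals_subset[OF I] by blast
    then show False
      using y z order_ideals_downward[OF I] by (auto simp: covers_def)
  qed
  then show "maximal_in le I y" using y by (auto simp: maximal_in_def)
qed

lemma Tog_eq_covers:
  assumes "y \<in> P"
  shows "Tog P le y I = of_bool (y \<notin> I \<and> (\<forall>z. covers P le z y \<longrightarrow> z \<in> I))
                      - of_bool (y \<in> I \<and> (\<forall>z. covers P le y z \<longrightarrow> z \<notin> I))"
  using assms by (simp add: Tog_eq_of_bool minimal_in_complement_iff_covers maximal_in_iff_covers)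

end

lemma Tog_insert_minimal_diff:
  assumes I: "I \<in> order_ideals P le" and x: "minimal_in le (P - I) x" and y: "y \<in> P"
  shows "Tog P le y (insert x I) - Tog P le y I
       = of_bool (covers P le y x \<and> (\<forall>z. covers P le y z \<longrightarrow> z \<notin> I))
       + of_bool (covers P le x y \<and> (\<forall>z. covers P le z y \<longrightarrow> z \<in> insert x I))
       - 2 * of_bool (y = x)"
proof -
  have xP: "x \<in> P" and xI: "x \<notin> I" using x by (auto simp: minimal_in_def)
  have below_x: "y \<in> I" if "covers P le y x" for y
    using x that by (auto simp: minimal_in_def covers_def)
  have above_x: "z \<notin> I" if "covers P le x z" for z
    using that xI order_ideals_downward[OF I] by (auto simp: covers_def)
  have x_addable: "\<forall>z. covers P le z x \<longrightarrow> z \<in> I"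
    using minimal_in_complement_iff_covers[OF I xP] x by blast
  have irrefl: "\<not> covers P le z z" for z by (simp add: covers_def)
  have plus: "of_bool (y \<notin> insert x I \<and> (\<forall>z. covers P le z y \<longrightarrow> z \<in> insert x I))
      - of_bool (y \<notin> I \<and> (\<forall>z. covers P le z y \<longrightarrow> z \<in> I))
    = of_bool (covers P le x y \<and> (\<forall>z. covers P le z y \<longrightarrow> z \<in> insert x I))
      - (of_bool (y = x) :: real)"
  proof (cases "y = x")
    case False
    then show ?thesis using xI above_x by (cases "covers P le x y") auto
  qed (use xI x_addable irrefl in auto)
  have minus: "of_bool (y \<in> insert x I \<and> (\<forall>z. covers P le y z \<longrightarrow> z \<notin> insert x I))
      - of_bool (y \<in> I \<and> (\<forall>z. covers P le y z \<longrightarrow> z \<notin> I))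
    = of_bool (y = x)
      - (of_bool (covers P le y x \<and> (\<forall>z. covers P le y z \<longrightarrow> z \<notin> I)) :: real)"
  proof (cases "y = x")
    case True
    then show ?thesis using xI above_x irrefl by auto
  next
    case False
    then show ?thesis using below_x by (cases "covers P le y x") auto
  qed
  show ?thesis
    unfolding Tog_eq_covers[OF I y] Tog_eq_covers[OF insert_minimal_order_ideal[OF I x] y]
    using plus minus by linarith
qed

lemma toggle_sum_insert_minimal:
  fixes c :: "'a \<Rightarrow> real"
  assumes I: "I \<in> order_ideals P le" and x: "minimal_in le (P - I) x"
  shows "(\<Sum>y\<in>P. c y * Tog P le y (insert x I)) - (\<Sum>y\<in>P. c y * Tog P le y I)
       = sum c {y. covers P le y x \<and> (\<forall>z. covers P le y z \<longrightarrow> z \<notin> I)}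
       + sum c {y. covers P le x y \<and> (\<forall>z. covers P le z y \<longrightarrow> z \<in> insert x I)} - 2 * c x"
proof -
  have xP: "x \<in> P" using x by (simp add: minimal_in_def)
  have "(\<Sum>y\<in>P. c y * Tog P le y (insert x I)) - (\<Sum>y\<in>P. c y * Tog P le y I)
      = (\<Sum>y\<in>P. c y * (Tog P le y (insert x I) - Tog P le y I))"
    by (simp add: sum_subtractf right_diff_distrib)
  also have "\<dots> = (\<Sum>y\<in>P. c y * of_bool (covers P le y x \<and> (\<forall>z. covers P le y z \<longrightarrow> z \<notin> I)))
      + (\<Sum>y\<in>P. c y * of_bool (covers P le x y \<and> (\<forall>z. covers P le z y \<longrightarrow> z \<in> insert x I)))
      - 2 * (\<Sum>y\<in>P. c y * of_bool (y = x))"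
    by (simp add: sum_subtractf[symmetric] sum.distrib[symmetric] sum_distrib_left
        Tog_insert_minimal_diff[OF I x] algebra_simps cong: sum.cong)
  also have "\<dots> = sum c {y. covers P le y x \<and> (\<forall>z. covers P le y z \<longrightarrow> z \<notin> I)}
       + sum c {y. covers P le x y \<and> (\<forall>z. covers P le z y \<longrightarrow> z \<in> insert x I)} - 2 * c x"
  proof -
    have "(\<Sum>y\<in>P. c y * of_bool (y = x)) = c x"
      using sum_mult_of_bool[OF finite, of "\<lambda>y. y = x" c] xP by simp
    moreover have "(\<Sum>y\<in>P. c y * of_bool (covers P le y x \<and> (\<forall>z. covers P le y z \<longrightarrow> z \<notin> I)))
        = sum c {y. covers P le y x \<and> (\<forall>z. covers P le y z \<longrightarrow> z \<notin> I)}"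
      by (rule sum_mult_of_bool[OF finite]) (simp add: covers_def)
    moreover have "(\<Sum>y\<in>P. c y * of_bool (covers P le x y \<and> (\<forall>z. covers P le z y \<longrightarrow> z \<in> insert x I)))
        = sum c {y. covers P le x y \<and> (\<forall>z. covers P le z y \<longrightarrow> z \<in> insert x I)}"
      by (rule sum_mult_of_bool[OF finite]) (simp add: covers_def)
    ultimately show ?thesis by simp
  qed
  finally show ?thesis .
qed

lemma sum_ind_equiv_half_card_by_increments:
  fixes c :: "'a \<Rightarrow> real"
  assumes base: "sum c {y. minimal_in le P y} = - real (card P) / 2"
    and step: "\<And>I x. I \<in> order_ideals P le \<Longrightarrow> minimal_in le (P - I) x \<Longrightarrow>
        sum c {y. covers P le y x \<and> (\<forall>z. covers P le y z \<longrightarrow> z \<notin> I)}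
      + sum c {y. covers P le x y \<and> (\<forall>z. covers P le z y \<longrightarrow> z \<in> insert x I)} - 2 * c x = 1"
  shows "sum_ind_equiv_half_card P le"
proof -
  have key: "real (card I) - real (card P) / 2 = (\<Sum>y\<in>P. c y * Tog P le y I)"
    if "I \<in> order_ideals P le" for I
    using that
  proof (induction "card I" arbitrary: I)
    case 0
    have "I = {}"
      using 0 finite_subset[OF order_ideals_subset[OF "0.prems"] finite] by simp
    moreover have "(\<Sum>y\<in>P. c y * Tog P le y {}) = sum c {y. minimal_in le P y}"
      unfolding Tog_eq_of_bool
      by (simp add: maximal_in_def) (rule sum_mult_of_bool[OF finite], simp add: minimal_in_def)
    ultimately show ?case using base by simp
  next
    case (Suc n)
    have IP: "I \<subseteq> P" using order_ideals_subset[OF Suc.prems] .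
    obtain x where x: "maximal_in le I x"
      using exists_maximal_in[OF IP] Suc.hyps(2) by fastforce
    note J = remove_maximal_order_ideal[OF Suc.prems x]
    have I_eq: "insert x (I - {x}) = I" and card_J: "card (I - {x}) = n"
      using x Suc.hyps(2) by (auto simp: maximal_in_def)
    have "(\<Sum>y\<in>P. c y * Tog P le y I) - (\<Sum>y\<in>P. c y * Tog P le y (I - {x})) = 1"
      using toggle_sum_insert_minimal[OF J, of c] step[OF J] I_eq by simp
    then show ?case using Suc.hyps(1)[OF card_J[symmetric] J(1)] card_J Suc.hyps(2) by simp
  qed
  show ?thesis
    unfolding toggle_equiv_def
    by (intro exI[of _ c] ballI) (simp add: sum_ind_eq_card[OF finite order_ideals_subset] key)
qed

lemma order_ideals_within_snoc:
  assumes xP: "x \<in> P" and x_not_below: "\<And>y. y \<in> set xs \<Longrightarrow> \<not> le x y"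
    and lc: "set (lc x) = {y. covers P le y x}"
  shows "{I \<in> order_ideals P le. I \<subseteq> set (xs @ [x])}
      = {I \<in> order_ideals P le. I \<subseteq> set xs}
        \<union> insert x ` {J \<in> order_ideals P le. J \<subseteq> set xs \<and> set (lc x) \<subseteq> J}"
proof (intro equalityI subsetI)
  fix I assume "I \<in> {I \<in> order_ideals P le. I \<subseteq> set (xs @ [x])}"
  then have I: "I \<in> order_ideals P le" and I_sub: "I \<subseteq> insert x (set xs)" by auto
  show "I \<in> {I \<in> order_ideals P le. I \<subseteq> set xs}
      \<union> insert x ` {J \<in> order_ideals P le. J \<subseteq> set xs \<and> set (lc x) \<subseteq> J}"
  proof (cases "x \<in> I")
    case True
    have "\<forall>z\<in>I - {x}. \<forall>y\<in>P. le y z \<longrightarrow> y \<in> I - {x}"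
    proof (intro ballI impI)
      fix z y assume z: "z \<in> I - {x}" and y: "y \<in> P" "le y z"
      have "y \<noteq> x" using z y(2) I_sub x_not_below by blast
      then show "y \<in> I - {x}" using order_ideals_downward[OF I _ y] z by blast
    qed
    then have "I - {x} \<in> order_ideals P le"
      using order_ideals_subset[OF I] unfolding order_ideals_def by blast
    moreover have "set (lc x) \<subseteq> I - {x}"
      using order_ideals_downward[OF I True] lc by (auto simp: covers_def)
    moreover have "I = insert x (I - {x})" using True by blast
    ultimately show ?thesis using I_sub by blast
  next
    case False
    then show ?thesis using I I_sub by blast
  qed
next
  have "x \<notin> set xs" using x_not_below reflp_onD[OF refl xP] by blast
  fix I assume "I \<in> {I \<in> order_ideals P le. I \<subseteq> set xs}
      \<union> insert x ` {J \<in> order_ideals P le. J \<subseteq> set xs \<and> set (lc x) \<subseteq> J}"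
  then consider "I \<in> order_ideals P le" "I \<subseteq> set xs"
    | J where "J \<in> order_ideals P le" "J \<subseteq> set xs" "set (lc x) \<subseteq> J" "I = insert x J"
    by blast
  then show "I \<in> {I \<in> order_ideals P le. I \<subseteq> set (xs @ [x])}"
  proof cases
    case (2 J)
    have "minimal_in le (P - J) x"
      using minimal_in_complement_iff_covers[OF 2(1) xP] 2 lc \<open>x \<notin> set xs\<close> by blast
    then show ?thesis using insert_minimal_order_ideal[OF 2(1)] 2 by auto
  qed auto
qed

lemma set_ideals_along:
  assumes "set xs \<subseteq> P" and "sorted_wrt (\<lambda>x y. \<not> le y x) xs"
    and lc: "\<And>x. x \<in> P \<Longrightarrow> set (lc x) = {y. covers P le y x}"
  shows "set (ideals_along lc xs) = {I \<in> order_ideals P le. I \<subseteq> set xs}"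
  using assms(1,2)
proof (induction xs rule: rev_induct)
  case Nil
  then show ?case by (auto simp: ideals_along_def order_ideals_def)
next
  case (snoc x xs)
  have xP: "x \<in> P" and xs: "set xs \<subseteq> P" using snoc.prems(1) by auto
  have "sorted_wrt (\<lambda>x y. \<not> le y x) xs" and x_not_below: "\<And>y. y \<in> set xs \<Longrightarrow> \<not> le x y"
    using snoc.prems(2) by (simp_all add: sorted_wrt_append)
  then show ?case
    using snoc.IH[OF xs] order_ideals_within_snoc[where lc = lc, OF xP x_not_below lc[OF xP]]
    by (simp add: ideals_along_def image_set set_filter)
qed

lemma sum_ind_equiv_half_card_by_certificate:
  fixes c :: "'a \<Rightarrow> real"
  assumes xs: "set xs = P" "sorted_wrt (\<lambda>x y. \<not> le y x) xs"
    and lc: "\<And>x. x \<in> P \<Longrightarrow> set (lc x) = {y. covers P le y x}"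
    and certificate: "\<forall>I\<in>set (ideals_along lc xs). real (card I) - real (card P) / 2 =
      (\<Sum>y\<in>P. c y * (of_bool (y \<notin> I \<and> set (lc y) \<subseteq> I)
                     - of_bool (y \<in> I \<and> (\<forall>z\<in>I. y \<notin> set (lc z)))))"
  shows "sum_ind_equiv_half_card P le"
proof -
  have "real (card I) - real (card P) / 2 = (\<Sum>y\<in>P. c y * Tog P le y I)"
    if I: "I \<in> order_ideals P le" for I
  proof -
    have "I \<in> set (ideals_along lc xs)"
      using set_ideals_along[of xs lc] xs lc I order_ideals_subset[OF I] by simp
    moreover have "Tog P le y I = of_bool (y \<notin> I \<and> set (lc y) \<subseteq> I)
                     - of_bool (y \<in> I \<and> (\<forall>z\<in>I. y \<notin> set (lc z)))" if "y \<in> P" for y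
      using Tog_eq_covers[OF I that] lc that order_ideals_subset[OF I] by (auto simp: covers_def)
    ultimately show ?thesis using certificate by simp
  qed
  then show ?thesis
    unfolding toggle_equiv_def
    using sum_ind_eq_card[OF finite order_ideals_subset] by (intro exI[of _ c] ballI) simp
qed

end

section \<open>Rectangles and shifted staircases\<close>

(* The change of the toggle sum when the square (i, j) joins I: the lower neighbours that were
   maximal in I and the upper neighbours that become minimal in the complement count once, and
   (i, j) itself counts -2 times. *)
definition grid_increment ::
    "(nat \<times> nat) set \<Rightarrow> (nat \<times> nat \<Rightarrow> real) \<Rightarrow> (nat \<times> nat) set \<Rightarrow> nat \<Rightarrow> nat \<Rightarrow> real" where
  "grid_increment S c I i j =
       of_bool ((i - 1, j) \<in> S \<and> (i - 1, j + 1) \<notin> I) * c (i - 1, j)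
     + of_bool ((i, j + 1) \<in> S \<and> (i - 1, j + 1) \<notin> S - I) * c (i, j + 1)
     + of_bool ((i, j - 1) \<in> S \<and> (i + 1, j - 1) \<notin> I) * c (i, j - 1)
     + of_bool ((i + 1, j) \<in> S \<and> (i + 1, j - 1) \<notin> S - I) * c (i + 1, j)
     - 2 * c (i, j)"

locale grid_poset =
  fixes S :: "(nat \<times> nat) set"
  assumes finite_grid: "finite S"
    and positive: "(i, j) \<in> S \<Longrightarrow> 0 < i \<and> 0 < j"
    and unit_step: "(p, q) \<in> S \<Longrightarrow> (i, j) \<in> S \<Longrightarrow> p \<le> i \<Longrightarrow> q \<le> j \<Longrightarrow> (p, q) \<noteq> (i, j) \<Longrightarrow>
      (Suc p, q) \<in> S \<and> p < i \<or> (p, Suc q) \<in> S \<and> q < j"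
begin

sublocale finite_poset S prod_le
  using finite_grid
  by unfold_locales (auto simp: reflp_on_def transp_on_def antisymp_on_def prod_le_def)

lemma covers_grid_iff:
  "covers S prod_le y x \<longleftrightarrow> y \<in> S \<and> x \<in> S \<and> (x = (Suc (fst y), snd y) \<or> x = (fst y, Suc (snd y)))"
proof
  assume cov: "covers S prod_le y x"
  obtain p q i j where y: "y = (p, q)" and x: "x = (i, j)" by fastforce
  have "(p, q) \<in> S" "(i, j) \<in> S" "p \<le> i" "q \<le> j" "(p, q) \<noteq> (i, j)"
    using cov by (auto simp: covers_def prod_le_def y x)
  from unit_step[OF this] have "(Suc p, q) = (i, j) \<or> (p, Suc q) = (i, j)"
    using cov by (auto simp: covers_def prod_le_def y x)
  then show "y \<in> S \<and> x \<in> S \<and> (x = (Suc (fst y), snd y) \<or> x = (fst y, Suc (snd y)))"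
    using cov by (auto simp: covers_def y x)
next
  assume "y \<in> S \<and> x \<in> S \<and> (x = (Suc (fst y), snd y) \<or> x = (fst y, Suc (snd y)))"
  then show "covers S prod_le y x"
    by (cases y) (auto simp: covers_def prod_le_def le_Suc_eq)
qed

lemma covers_grid_above_iff:
  "covers S prod_le (i, j) y \<longleftrightarrow> (i, j) \<in> S \<and> y \<in> S \<and> (y = (i + 1, j) \<or> y = (i, j + 1))"
  by (auto simp: covers_grid_iff)

lemma covers_grid_below_iff:
  "covers S prod_le z (i, j) \<longleftrightarrow> z \<in> S \<and> (i, j) \<in> S \<and> (z = (i - 1, j) \<or> z = (i, j - 1))"
  using positive[of i j] by (cases z) (auto simp: covers_grid_iff)

lemma minimal_in_grid_iff:
  assumes "(1, 1) \<in> S"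
  shows "minimal_in prod_le S y \<longleftrightarrow> y = (1, 1)"
  using assms positive by (cases y) (fastforce simp: minimal_in_def prod_le_def Suc_le_eq)

context
  fixes I i j
  assumes I: "I \<in> order_ideals S prod_le" and x: "minimal_in prod_le (S - I) (i, j)"
begin

private lemma x_in: "(i, j) \<in> S" "(i, j) \<notin> I" "0 < i" "0 < j"
  using x positive by (auto simp: minimal_in_def)

lemma sum_lower_covers_grid:
  fixes c :: "nat \<times> nat \<Rightarrow> real"
  shows "sum c {y. covers S prod_le y (i, j) \<and> (\<forall>z. covers S prod_le y z \<longrightarrow> z \<notin> I)}
   = of_bool ((i - 1, j) \<in> S \<and> (i - 1, j + 1) \<notin> I) * c (i - 1, j)
   + of_bool ((i, j - 1) \<in> S \<and> (i + 1, j - 1) \<notin> I) * c (i, j - 1)"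
proof -
  have "{y. covers S prod_le y (i, j) \<and> (\<forall>z. covers S prod_le y z \<longrightarrow> z \<notin> I)}
      = {y. y = (i - 1, j) \<and> ((i - 1, j) \<in> S \<and> (i - 1, j + 1) \<notin> I)
          \<or> y = (i, j - 1) \<and> ((i, j - 1) \<in> S \<and> (i + 1, j - 1) \<notin> I)}"
    using x_in order_ideals_subset[OF I] by (auto simp: covers_grid_iff)
  then show ?thesis by (simp only:) (rule sum_two_points, use x_in in simp)
qed

lemma sum_upper_covers_grid:
  fixes c :: "nat \<times> nat \<Rightarrow> real"
  shows "sum c {y. covers S prod_le (i, j) y \<and> (\<forall>z. covers S prod_le z y \<longrightarrow> z \<in> insert (i, j) I)}
   = of_bool ((i, j + 1) \<in> S \<and> (i - 1, j + 1) \<notin> S - I) * c (i, j + 1)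
   + of_bool ((i + 1, j) \<in> S \<and> (i + 1, j - 1) \<notin> S - I) * c (i + 1, j)"
proof -
  have "(\<forall>z. covers S prod_le z (i, j + 1) \<longrightarrow> z \<in> insert (i, j) I) \<longleftrightarrow> (i - 1, j + 1) \<notin> S - I"
    if "(i, j + 1) \<in> S"
    using x_in that by (fastforce simp: covers_grid_below_iff)
  moreover have "(\<forall>z. covers S prod_le z (i + 1, j) \<longrightarrow> z \<in> insert (i, j) I) \<longleftrightarrow> (i + 1, j - 1) \<notin> S - I"
    if "(i + 1, j) \<in> S"
    using x_in that by (fastforce simp: covers_grid_below_iff)
  ultimately have "{y. covers S prod_le (i, j) y \<and> (\<forall>z. covers S prod_le z y \<longrightarrow> z \<in> insert (i, j) I)}
      = {y. y = (i, j + 1) \<and> ((i, j + 1) \<in> S \<and> (i - 1, j + 1) \<notin> S - I)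
          \<or> y = (i + 1, j) \<and> ((i + 1, j) \<in> S \<and> (i + 1, j - 1) \<notin> S - I)}"
    using x_in by (auto simp: covers_grid_above_iff)
  then show ?thesis by (simp only:) (rule sum_two_points, simp)
qed

end

lemma sum_ind_equiv_half_card_grid:
  fixes c :: "nat \<times> nat \<Rightarrow> real"
  assumes "(1, 1) \<in> S" and "c (1, 1) = - real (card S) / 2"
    and step: "\<And>I i j. I \<in> order_ideals S prod_le \<Longrightarrow> minimal_in prod_le (S - I) (i, j) \<Longrightarrow>
        grid_increment S c I i j = 1"
  shows "sum_ind_equiv_half_card S prod_le"
proof (rule sum_ind_equiv_half_card_by_increments)
  show "sum c {y. minimal_in prod_le S y} = - real (card S) / 2"
    using assms(1,2) by (simp add: minimal_in_grid_iff)
next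
  fix I x assume I: "I \<in> order_ideals S prod_le" and x: "minimal_in prod_le (S - I) x"
  obtain i j where ij: "x = (i, j)" by fastforce
  show "sum c {y. covers S prod_le y x \<and> (\<forall>z. covers S prod_le y z \<longrightarrow> z \<notin> I)}
      + sum c {y. covers S prod_le x y \<and> (\<forall>z. covers S prod_le z y \<longrightarrow> z \<in> insert x I)}
      - 2 * c x = 1"
    using step[OF I x[unfolded ij]]
    unfolding ij grid_increment_def sum_lower_covers_grid[OF I x[unfolded ij]] sum_upper_covers_grid[OF I x[unfolded ij]]
    by simp
qed

end

lemma grid_poset_rect: "grid_poset (rect a b)"
proof
  show "finite (rect a b)"
    by (rule finite_subset[of _ "{1..a} \<times> {1..b}"]) (auto simp: rect_def)
qed (auto simp: rect_def)

(* A quadratic in the content i - j with second difference 1, vanishing at the contents a and -b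
   just outside the rectangle. *)
definition rect_coeff :: "nat \<Rightarrow> nat \<Rightarrow> nat \<times> nat \<Rightarrow> real" where
  "rect_coeff a b y = (real (fst y) - real (snd y) + real b) * (real (fst y) - real (snd y) - real a) / 2"

lemma rect_increment:
  assumes I: "I \<in> order_ideals (rect a b) prod_le" and x: "minimal_in prod_le (rect a b - I) (i, j)"
  shows "grid_increment (rect a b) (rect_coeff a b) I i j = 1"
proof -
  have X: "1 \<le> i" "i \<le> a" "1 \<le> j" "j \<le> b" using x by (auto simp: minimal_in_def rect_def)
  have I_sub: "I \<subseteq> rect a b" using order_ideals_subset[OF I] .
  define f where "f u = (u + real b) * (u - real a) / 2" for u
  define u where "u = real i - real j"
  have c: "rect_coeff a b (i - 1, j) = f (u - 1)" "rect_coeff a b (i, j + 1) = f (u - 1)"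
    "rect_coeff a b (i, j - 1) = f (u + 1)" "rect_coeff a b (i + 1, j) = f (u + 1)"
    "rect_coeff a b (i, j) = f u"
    using X by (simp_all add: rect_coeff_def f_def u_def of_nat_diff algebra_simps)
  have "of_bool ((i - 1, j) \<in> rect a b \<and> (i - 1, j + 1) \<notin> I) * f (u - 1)
      + of_bool ((i, j + 1) \<in> rect a b \<and> (i - 1, j + 1) \<notin> rect a b - I) * f (u - 1) = f (u - 1)"
  proof (cases "i = 1 \<and> j = b")
    case True
    then show ?thesis by (simp add: f_def u_def)
  next
    case False
    then show ?thesis using X I_sub by (auto simp: rect_def)
  qed
  moreover have "of_bool ((i, j - 1) \<in> rect a b \<and> (i + 1, j - 1) \<notin> I) * f (u + 1)
      + of_bool ((i + 1, j) \<in> rect a b \<and> (i + 1, j - 1) \<notin> rect a b - I) * f (u + 1) = f (u + 1)"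
  proof (cases "i = a \<and> j = 1")
    case True
    then show ?thesis by (simp add: f_def u_def)
  next
    case False
    then show ?thesis using X I_sub by (auto simp: rect_def)
  qed
  moreover have "f (u - 1) + f (u + 1) - 2 * f u = 1" by (simp add: f_def field_simps)
  ultimately show ?thesis unfolding grid_increment_def c by linarith
qed

lemma card_rect: "card (rect a b) = a * b"
proof -
  have "rect a b = {1..a} \<times> {1..b}" by (auto simp: rect_def)
  then show ?thesis by (simp add: card_cartesian_product)
qed

lemma sum_ind_equiv_half_card_rect:
  assumes "1 \<le> a" and "1 \<le> b"
  shows "sum_ind_equiv_half_card (rect a b) prod_le"
proof (rule grid_poset.sum_ind_equiv_half_card_grid[OF grid_poset_rect, where c = "rect_coeff a b"])
  show "(1, 1) \<in> rect a b" using assms by (simp add: rect_def)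
  show "rect_coeff a b (1, 1) = - real (card (rect a b)) / 2"
    by (simp add: rect_coeff_def card_rect)
qed (rule rect_increment)

lemma grid_poset_staircase: "grid_poset (staircase n)"
proof
  show "finite (staircase n)"
    by (rule finite_subset[of _ "{1..n} \<times> {1..n}"]) (auto simp: staircase_def)
qed (auto simp: staircase_def)

lemma card_staircase: "2 * card (staircase n) = n * (n + 1)"
proof (induction n)
  case 0
  have "staircase 0 = {}" by (auto simp: staircase_def)
  then show ?case by simp
next
  case (Suc n)
  have "staircase (Suc n) = staircase n \<union> (\<lambda>i. (i, Suc n)) ` {1..Suc n}"
    by (auto simp: staircase_def)
  moreover have "staircase n \<inter> (\<lambda>i. (i, Suc n)) ` {1..Suc n} = {}"
    by (auto simp: staircase_def)
  moreover have "card ((\<lambda>i. (i, Suc n)) ` {1..Suc n}) = Suc n"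
    by (subst card_image) (auto simp: inj_on_def)
  ultimately have "card (staircase (Suc n)) = card (staircase n) + Suc n"
    using card_Un_disjoint[OF grid_poset.finite_grid[OF grid_poset_staircase]] by simp
  then show ?case using Suc.IH by simp
qed

(* Halved on the diagonal because both diagonal neighbours of (i, i + 1) enter its increment,
   while off the diagonal exactly one neighbour of each pair does. *)
definition staircase_coeff :: "nat \<Rightarrow> nat \<times> nat \<Rightarrow> real" where
  "staircase_coeff n y = (if fst y = snd y then 1 / 2 else 1) * rect_coeff (n + 1) n y"

lemma staircase_increment:
  assumes I: "I \<in> order_ideals (staircase n) prod_le"
    and x: "minimal_in prod_le (staircase n - I) (i, j)"
  shows "grid_increment (staircase n) (staircase_coeff n) I i j = 1"
proof -
  have X: "1 \<le> i" "i \<le> j" "j \<le> n" using x by (auto simp: minimal_in_def staircase_def)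
  have I_sub: "I \<subseteq> staircase n" using order_ideals_subset[OF I] .
  define f where "f u = (u + real n) * (u - real n - 1) / 2" for u
  define u where "u = real i - real j"
  have "i - 1 \<noteq> j" "i \<noteq> j + 1" using X by linarith+
  then have c: "staircase_coeff n (i - 1, j) = f (u - 1)" "staircase_coeff n (i, j + 1) = f (u - 1)"
    using X by (simp_all add: staircase_coeff_def rect_coeff_def f_def u_def of_nat_diff algebra_simps)
  have A: "of_bool ((i - 1, j) \<in> staircase n \<and> (i - 1, j + 1) \<notin> I) * f (u - 1)
      + of_bool ((i, j + 1) \<in> staircase n \<and> (i - 1, j + 1) \<notin> staircase n - I) * f (u - 1)
      = f (u - 1)"
  proof (cases "i = 1 \<and> j = n")
    case True
    then show ?thesis by (simp add: f_def u_def)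
  next
    case False
    then show ?thesis using X I_sub by (auto simp: staircase_def)
  qed
  consider "i = j" | "j = i + 1" | "i + 1 < j" using X by linarith
  then show ?thesis
  proof cases
    case 1
    then have "staircase_coeff n (i, j) = f 0 / 2" "f (u - 1) - f 0 = 1"
      by (simp_all add: staircase_coeff_def rect_coeff_def f_def u_def field_simps)
    moreover have "(i, j - 1) \<notin> staircase n" "(i + 1, j) \<notin> staircase n"
      using 1 X by (auto simp: staircase_def)
    ultimately show ?thesis unfolding grid_increment_def using 1 A c by simp
  next
    case 2
    then have "staircase_coeff n (i, j - 1) = f 0 / 2" "staircase_coeff n (i + 1, j) = f 0 / 2"
      "staircase_coeff n (i, j) = f u" "f (u - 1) + f 0 - 2 * f u = 1"
      by (simp_all add: staircase_coeff_def rect_coeff_def f_def u_def field_simps)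
    then show ?thesis unfolding grid_increment_def using 2 A c X I_sub by (auto simp: staircase_def)
  next
    case 3
    then have "i \<noteq> j - 1" "i + 1 \<noteq> j" "i \<noteq> j" by linarith+
    then have c': "staircase_coeff n (i, j - 1) = f (u + 1)" "staircase_coeff n (i + 1, j) = f (u + 1)"
      "staircase_coeff n (i, j) = f u"
      using X by (simp_all add: staircase_coeff_def rect_coeff_def f_def u_def of_nat_diff algebra_simps)
    have "of_bool ((i, j - 1) \<in> staircase n \<and> (i + 1, j - 1) \<notin> I) * f (u + 1)
        + of_bool ((i + 1, j) \<in> staircase n \<and> (i + 1, j - 1) \<notin> staircase n - I) * f (u + 1)
        = f (u + 1)"
      using 3 X by (auto simp: staircase_def)
    moreover have "f (u - 1) + f (u + 1) - 2 * f u = 1" by (simp add: f_def field_simps)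
    ultimately show ?thesis using A unfolding grid_increment_def c c' by linarith
  qed
qed

lemma sum_ind_equiv_half_card_staircase:
  assumes "1 \<le> n"
  shows "sum_ind_equiv_half_card (staircase n) prod_le"
proof (rule grid_poset.sum_ind_equiv_half_card_grid[OF grid_poset_staircase,
      where c = "staircase_coeff n"])
  show "(1, 1) \<in> staircase n" using assms by (simp add: staircase_def)
  have "real (card (staircase n)) = real n * (real n + 1) / 2"
    using arg_cong[OF card_staircase[of n], of real] by (simp add: algebra_simps)
  then show "staircase_coeff n (1, 1) = - real (card (staircase n)) / 2"
    by (simp add: staircase_coeff_def rect_coeff_def field_simps)
qed (rule staircase_increment)

section \<open>Double-tailed diamonds\<close>

locale layered_poset =
  fixes P :: "'a set" and le :: "'a \<Rightarrow> 'a \<Rightarrow> bool" and rk :: "'a \<Rightarrow> nat"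
  assumes finite_layers: "finite P"
    and le_iff_rank: "x \<in> P \<Longrightarrow> y \<in> P \<Longrightarrow> le x y \<longleftrightarrow> x = y \<or> rk x < rk y"
    and rank_interval: "x \<in> P \<Longrightarrow> y \<in> P \<Longrightarrow> rk x \<le> r \<Longrightarrow> r \<le> rk y \<Longrightarrow> \<exists>z\<in>P. rk z = r"
begin

sublocale finite_poset P le
  using finite_layers
  by unfold_locales (auto simp: reflp_on_def transp_on_def antisymp_on_def le_iff_rank)

lemma covers_layered_iff: "covers P le y x \<longleftrightarrow> y \<in> P \<and> x \<in> P \<and> Suc (rk y) = rk x"
proof
  assume cov: "covers P le y x"
  then have y: "y \<in> P" and x: "x \<in> P" and "rk y < rk x"
    by (auto simp: covers_def le_iff_rank)
  moreover have "\<not> Suc (rk y) < rk x"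
  proof
    assume "Suc (rk y) < rk x"
    moreover obtain z where "z \<in> P" "rk z = Suc (rk y)"
      using rank_interval[OF y x, of "Suc (rk y)"] calculation by auto
    ultimately show False using cov by (auto simp: covers_def le_iff_rank)
  qed
  ultimately show "y \<in> P \<and> x \<in> P \<and> Suc (rk y) = rk x" by simp
qed (auto simp: covers_def le_iff_rank)

lemma minimal_in_layered_iff: "minimal_in le P y \<longleftrightarrow> y \<in> P \<and> (\<forall>z\<in>P. rk y \<le> rk z)"
  by (auto simp: minimal_in_def le_iff_rank not_less)

lemma sum_lower_covers_layered:
  fixes c :: "'a \<Rightarrow> real"
  assumes "I \<subseteq> P" and "x \<in> P - I"
  shows "sum c {y. covers P le y x \<and> (\<forall>z. covers P le y z \<longrightarrow> z \<notin> I)}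
    = (if ({z \<in> P. rk z = rk x} - {x}) \<inter> I = {} then sum c {y \<in> P. Suc (rk y) = rk x} else 0)"
proof -
  have "{y. covers P le y x \<and> (\<forall>z. covers P le y z \<longrightarrow> z \<notin> I)}
      = (if ({z \<in> P. rk z = rk x} - {x}) \<inter> I = {} then {y \<in> P. Suc (rk y) = rk x} else {})"
    using assms by (auto simp: covers_layered_iff)
  then show ?thesis by simp
qed

lemma sum_upper_covers_layered:
  fixes c :: "'a \<Rightarrow> real"
  assumes "x \<in> P"
  shows "sum c {y. covers P le x y \<and> (\<forall>z. covers P le z y \<longrightarrow> z \<in> insert x I)}
    = (if {z \<in> P. rk z = rk x} - {x} \<subseteq> I then sum c {y \<in> P. rk y = Suc (rk x)} else 0)"
proof -
  have "{y. covers P le x y \<and> (\<forall>z. covers P le z y \<longrightarrow> z \<in> insert x I)}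
      = (if {z \<in> P. rk z = rk x} - {x} \<subseteq> I then {y \<in> P. rk y = Suc (rk x)} else {})"
    using assms by (auto simp: covers_layered_iff)
  then show ?thesis by simp
qed

end

definition diamond_rank :: "nat \<Rightarrow> nat \<times> nat \<Rightarrow> nat" where
  "diamond_rank n y = (if fst y = 0 then snd y else if fst y = 1 then n else 2 * n - snd y)"

lemma mem_diamond:
  "(a, b) \<in> diamond n \<longleftrightarrow> a = 0 \<and> 1 \<le> b \<and> b < n \<or> a = 1 \<and> (b = 1 \<or> b = 2) \<or> a = 2 \<and> 1 \<le> b \<and> b < n"
  by (auto simp: diamond_def)

lemma diamond_rank_bounds:
  assumes "2 \<le> n" and "y \<in> diamond n"
  shows "0 < diamond_rank n y" and "diamond_rank n y < 2 * n"
  using assms by (cases y, auto simp: mem_diamond diamond_rank_def)+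

lemma diamond_level:
  assumes "2 \<le> n"
  shows "{y \<in> diamond n. diamond_rank n y = s}
    = (if s = 0 then {} else if s < n then {(0, s)} else if s = n then {(1, 1), (1, 2)}
       else if s < 2 * n then {(2, 2 * n - s)} else {})"
proof -
  have level: "(a, b) \<in> diamond n \<and> diamond_rank n (a, b) = s \<longleftrightarrow>
    (a, b) \<in> (if s = 0 then {} else if s < n then {(0, s)} else if s = n then {(1, 1), (1, 2)}
       else if s < 2 * n then {(2, 2 * n - s)} else {})" for a b
    using assms by (auto simp: mem_diamond diamond_rank_def)
  show ?thesis
    by (rule set_eqI) (use level[of "fst y" "snd y" for y] in simp)
qed

lemma diamond_level_others:
  assumes "2 \<le> n" and "x \<in> diamond n"
  shows "{z \<in> diamond n. diamond_rank n z = diamond_rank n x} - {x}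
    = (if diamond_rank n x = n then {if x = (1, 1) then (1, 2) else (1, 1)} else {})"
  using assms diamond_rank_bounds[OF assms] unfolding diamond_level[OF assms(1)]
  by (cases x) (auto simp: mem_diamond diamond_rank_def)

lemma layered_poset_diamond:
  assumes "2 \<le> n"
  shows "layered_poset (diamond n) diamond_le (diamond_rank n)"
proof
  show "finite (diamond n)" by (simp add: diamond_def)
  show "diamond_le x y \<longleftrightarrow> x = y \<or> diamond_rank n x < diamond_rank n y"
    if "x \<in> diamond n" "y \<in> diamond n" for x y
    using that assms by (cases x; cases y) (auto simp: mem_diamond diamond_rank_def diamond_le_def)
  show "\<exists>z\<in>diamond n. diamond_rank n z = r"
    if "x \<in> diamond n" "y \<in> diamond n" "diamond_rank n x \<le> r" "r \<le> diamond_rank n y" for x y r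
  proof -
    have "0 < r" "r < 2 * n"
      using diamond_rank_bounds[OF assms that(1)] diamond_rank_bounds[OF assms that(2)] that(3,4)
      by linarith+
    then have "{z \<in> diamond n. diamond_rank n z = r} \<noteq> {}"
      unfolding diamond_level[OF assms] by simp
    then show ?thesis by blast
  qed
qed

(* A quadratic in the rank with second difference 1 on either side of the middle rank n, vanishing
   at the ranks 0 and 2n just outside the poset; halved on the middle rank, which holds the two
   incomparable elements. *)
definition diamond_coeff :: "nat \<Rightarrow> nat \<Rightarrow> real" where
  "diamond_coeff n s =
    (if s < n then - real s * (2 * real n + 1 - real s) / 2
     else if s = n then - real n * (real n + 1) / 4
     else - (2 * real n - real s) * (real s + 1) / 2)"

lemma sum_diamond_coeff_level:
  assumes "2 \<le> n" and "s \<le> 2 * n"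
  shows "sum (\<lambda>y. diamond_coeff n (diamond_rank n y)) {y \<in> diamond n. diamond_rank n y = s}
    = (if s = n then 2 else 1) * diamond_coeff n s"
proof -
  have "sum (\<lambda>y. diamond_coeff n (diamond_rank n y)) {y \<in> diamond n. diamond_rank n y = s}
      = real (card {y \<in> diamond n. diamond_rank n y = s}) * diamond_coeff n s"
    by simp
  also have "\<dots> = (if s = n then 2 else 1) * diamond_coeff n s"
    using assms unfolding diamond_level[OF assms(1)] by (auto simp: diamond_coeff_def)
  finally show ?thesis .
qed

lemma diamond_coeff_middle:
  assumes "2 \<le> n"
  shows "diamond_coeff n (n - 1) - 2 * diamond_coeff n n = 1"
    and "diamond_coeff n (n + 1) - 2 * diamond_coeff n n = 1"
  using assms by (simp_all add: diamond_coeff_def of_nat_diff field_simps)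

lemma diamond_coeff_second_difference:
  assumes "0 < t" and "t \<noteq> n"
  shows "(if t - 1 = n then 2 else 1) * diamond_coeff n (t - 1)
       + (if t + 1 = n then 2 else 1) * diamond_coeff n (t + 1) - 2 * diamond_coeff n t = 1"
proof -
  have rt: "real (t - 1) = real t - 1" using assms(1) by simp
  consider "t + 1 = n" | "t = n + 1" | "t + 1 < n" | "n + 1 < t" using assms(2) by linarith
  then show ?thesis
  proof cases
    case 1
    then have nr: "real n = real t + 1" and "t - 1 \<noteq> n" "t - 1 < n" "t < n" by simp_all
    then show ?thesis using 1 rt by (simp add: diamond_coeff_def) (simp add: nr field_simps)
  next
    case 2
    then have "real t = real n + 1" by simp
    then show ?thesis using 2 rt by (simp add: diamond_coeff_def field_simps)
  next
    case 3
    then show ?thesis using rt by (simp add: diamond_coeff_def field_simps)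
  next
    case 4
    then have "\<not> t - 1 < n" "t - 1 \<noteq> n" by linarith+
    then show ?thesis using 4 rt by (simp add: diamond_coeff_def field_simps)
  qed
qed

lemma diamond_increment:
  assumes n: "2 \<le> n" and I: "I \<in> order_ideals (diamond n) diamond_le"
    and x: "minimal_in diamond_le (diamond n - I) x"
  shows "sum (\<lambda>y. diamond_coeff n (diamond_rank n y))
          {y. covers (diamond n) diamond_le y x \<and> (\<forall>z. covers (diamond n) diamond_le y z \<longrightarrow> z \<notin> I)}
      + sum (\<lambda>y. diamond_coeff n (diamond_rank n y))
          {y. covers (diamond n) diamond_le x y \<and> (\<forall>z. covers (diamond n) diamond_le z y \<longrightarrow> z \<in> insert x I)}
      - 2 * diamond_coeff n (diamond_rank n x) = 1"
proof -
  interpret layered_poset "diamond n" diamond_le "diamond_rank n"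
    using layered_poset_diamond[OF n] .
  define t where "t = diamond_rank n x"
  have xP: "x \<in> diamond n - I" using x by (simp add: minimal_in_def)
  have I_sub: "I \<subseteq> diamond n" using order_ideals_subset[OF I] .
  have t: "0 < t" "t < 2 * n" using diamond_rank_bounds[OF n] xP by (simp_all add: t_def)
  have lower: "{y \<in> diamond n. Suc (diamond_rank n y) = t} = {y \<in> diamond n. diamond_rank n y = t - 1}"
    using t by auto
  have sum_below: "sum (\<lambda>y. diamond_coeff n (diamond_rank n y)) {y \<in> diamond n. diamond_rank n y = t - 1}
      = (if t - 1 = n then 2 else 1) * diamond_coeff n (t - 1)"
    and sum_above: "sum (\<lambda>y. diamond_coeff n (diamond_rank n y)) {y \<in> diamond n. diamond_rank n y = Suc t}
      = (if t + 1 = n then 2 else 1) * diamond_coeff n (t + 1)"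
    using sum_diamond_coeff_level[OF n, of "t - 1"] sum_diamond_coeff_level[OF n, of "t + 1"] t
    by simp_all
  show ?thesis
    unfolding sum_lower_covers_layered[OF I_sub xP] sum_upper_covers_layered[OF DiffD1[OF xP]]
      t_def[symmetric] lower sum_below sum_above diamond_level_others[OF n DiffD1[OF xP], folded t_def]
    using diamond_coeff_middle[OF n] diamond_coeff_second_difference[OF t(1)] xP n
    by (cases "t = n"; cases "(if x = (1, 1) then (1, 2) else (1, 1)) \<in> I") simp_all
qed

lemma card_diamond:
  assumes "2 \<le> n"
  shows "card (diamond n) = 2 * n"
proof -
  let ?A = "{1..n - 1}" and ?M = "{(1, 1), (1, 2)} :: (nat \<times> nat) set"
  let ?X = "Pair (0 :: nat) ` ?A" and ?Z = "Pair (2 :: nat) ` ?A"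
  have "diamond n = ?X \<union> (?M \<union> ?Z)" by (auto simp: mem_diamond)
  moreover have "card (?X \<union> (?M \<union> ?Z)) = card ?X + card (?M \<union> ?Z)"
    by (rule card_Un_disjoint) auto
  moreover have "card (?M \<union> ?Z) = card ?M + card ?Z"
    by (rule card_Un_disjoint) auto
  moreover have "card ?X = n - 1" "card ?Z = n - 1"
    by (simp_all add: card_image inj_on_def)
  ultimately show ?thesis using assms by simp
qed

lemma sum_ind_equiv_half_card_diamond:
  assumes n: "2 \<le> n"
  shows "sum_ind_equiv_half_card (diamond n) diamond_le"
proof -
  interpret layered_poset "diamond n" diamond_le "diamond_rank n"
    using layered_poset_diamond[OF n] .
  show ?thesis
  proof (rule sum_ind_equiv_half_card_by_increments[where c = "\<lambda>y. diamond_coeff n (diamond_rank n y)"])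
    have "(0, 1) \<in> diamond n" "diamond_rank n (0, 1) = 1"
      using n by (simp_all add: mem_diamond diamond_rank_def)
    then have "{y. minimal_in diamond_le (diamond n) y} = {y \<in> diamond n. diamond_rank n y = 1}"
      unfolding minimal_in_layered_iff using diamond_rank_bounds(1)[OF n]
      by (fastforce intro: le_antisym simp: Suc_le_eq)
    then show "sum (\<lambda>y. diamond_coeff n (diamond_rank n y)) {y. minimal_in diamond_le (diamond n) y}
        = - real (card (diamond n)) / 2"
      using n sum_diamond_coeff_level[OF n, of 1] by (simp add: card_diamond diamond_coeff_def)
  qed (rule diamond_increment[OF n])
qed

section \<open>The exceptional posets\<close>

lemma reflp_root_le: "reflp root_le"
  by (simp add: reflp_def root_le_def list.rel_refl)

lemma transp_root_le: "transp root_le"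
  unfolding transp_def root_le_def by (blast intro: list_all2_trans order_trans)

lemma antisymp_root_le: "antisymp root_le"
  unfolding antisymp_def root_le_def by (blast intro: list_all2_antisym antisym)

(* Stated for the positions in L rather than its elements, so that evaluating the certificate only
   manipulates sets of numbers; LC lists the positions of the lower covers. *)
lemma sum_ind_equiv_half_card_by_indexed_certificate:
  fixes L :: "'a list" and LC :: "nat list list" and C :: "real list"
  assumes "distinct L" and "reflp le" and "transp le" and "antisymp le"
    and "sorted_wrt (\<lambda>x y. \<not> le y x) L"
    and "\<forall>j\<in>{..<length L}. \<forall>i\<in>set (LC ! j). covers {..<length L} (\<lambda>i j. le (L ! i) (L ! j)) i j"
    and "\<forall>j\<in>{..<length L}. \<forall>i\<in>{..<length L}.
           le (L ! i) (L ! j) \<and> i \<noteq> j \<longrightarrow> (\<exists>k\<in>set (LC ! j). le (L ! i) (L ! k))"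
    and "\<forall>I\<in>set (ideals_along ((!) LC) [0..<length L]). real (card I) - real (length L) / 2 =
           (\<Sum>y<length L. C ! y * (of_bool (y \<notin> I \<and> set (LC ! y) \<subseteq> I)
                                  - of_bool (y \<in> I \<and> (\<forall>z\<in>I. y \<notin> set (LC ! z)))))"
  shows "sum_ind_equiv_half_card (set L) le"
proof -
  let ?le = "\<lambda>i j. le (L ! i) (L ! j)"
  interpret index: finite_poset "{..<length L}" ?le
  proof
    show "reflp_on {..<length L} ?le" using assms(2) by (simp add: reflp_def reflp_on_def)
    show "transp_on {..<length L} ?le" using assms(3) by (simp add: transp_def transp_on_def)
    show "antisymp_on {..<length L} ?le"
      using assms(1,4) nth_eq_iff_index_eq[OF assms(1)] by (auto simp: antisymp_def antisymp_on_def)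
  qed simp
  have "sum_ind_equiv_half_card {..<length L} ?le"
  proof (rule index.sum_ind_equiv_half_card_by_certificate[where xs = "[0..<length L]" and c = "(!) C"])
    show "sorted_wrt (\<lambda>i j. \<not> ?le j i) [0..<length L]"
      using assms(5) sorted_wrt_map[of "\<lambda>x y. \<not> le y x" "(!) L" "[0..<length L]"]
      by (simp add: map_nth)
    show "set (LC ! j) = {i. covers {..<length L} ?le i j}" if "j \<in> {..<length L}" for j
      using lower_covers_eqI[of "{..<length L}" "(!) LC" ?le] assms(6,7) that by blast
  qed (use assms(8) in \<open>simp_all add: atLeast0LessThan\<close>)
  moreover have "order_iso (set L) le {..<length L} ?le (the_inv_into {..<length L} ((!) L))"
    using bij_betw_nth[OF assms(1) refl refl]
    by (intro order_iso_the_inv_into) (simp add: order_iso_def)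
  ultimately show ?thesis using sum_ind_equiv_half_card_order_iso by blast
qed

definition E6_roots :: "int list list" where
  "E6_roots =
   [[1,0,0,0,0,0], [1,0,1,0,0,0], [1,0,1,1,0,0], [1,0,1,1,1,0],
    [1,0,1,1,1,1], [1,1,1,1,0,0], [1,1,1,1,1,0], [1,1,1,1,1,1],
    [1,1,1,2,1,0], [1,1,1,2,1,1], [1,1,1,2,2,1], [1,1,2,2,1,0],
    [1,1,2,2,1,1], [1,1,2,2,2,1], [1,1,2,3,2,1], [1,2,2,3,2,1]]"

definition E6_lower_covers :: "nat list list" where
  "E6_lower_covers =
   [[], [0], [1], [2], [3], [2], [3, 5], [4, 6],
    [6], [7, 8], [9], [8], [9, 11], [10, 12], [13], [14]]"

definition E6_coefficients :: "real list" where
  "E6_coefficients =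
   [-8, -15, -21, -15, -8, -11, -21, -15, -15,
    -21, -11, -8, -15, -21, -15, -8]"

definition E7_roots :: "int list list" where
  "E7_roots =
   [[0,0,0,0,0,0,1], [0,0,0,0,0,1,1], [0,0,0,0,1,1,1], [0,0,0,1,1,1,1],
    [0,0,1,1,1,1,1], [0,1,0,1,1,1,1], [0,1,1,1,1,1,1], [0,1,1,2,1,1,1],
    [0,1,1,2,2,1,1], [0,1,1,2,2,2,1], [1,0,1,1,1,1,1], [1,1,1,1,1,1,1],
    [1,1,1,2,1,1,1], [1,1,1,2,2,1,1], [1,1,1,2,2,2,1], [1,1,2,2,1,1,1],
    [1,1,2,2,2,1,1], [1,1,2,2,2,2,1], [1,1,2,3,2,1,1], [1,1,2,3,2,2,1],
    [1,1,2,3,3,2,1], [1,2,2,3,2,1,1], [1,2,2,3,2,2,1], [1,2,2,3,3,2,1],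
    [1,2,2,4,3,2,1], [1,2,3,4,3,2,1], [2,2,3,4,3,2,1]]"

definition E7_lower_covers :: "nat list list" where
  "E7_lower_covers =
   [[], [0], [1], [2], [3], [3], [4, 5], [6],
    [7], [8], [4], [6, 10], [7, 11], [8, 12], [9, 13], [12],
    [13, 15], [14, 16], [16], [17, 18], [19], [18], [19, 21], [20, 22],
    [23], [24], [25]]"

definition E7_coefficients :: "real list" where
  "E7_coefficients =
   [-27 / 2, -26, -75 / 2, -48, -33, -49 / 2, -48, -75 / 2, -26,
    -27 / 2, -17, -33, -48, -75 / 2, -26, -49 / 2, -48, -75 / 2,
    -33, -48, -49 / 2, -17, -33, -48, -75 / 2, -26, -27 / 2]"

lemma LambdaE6_eq: "LambdaE6 = set E6_roots"
  by (simp add: LambdaE6_def E6_roots_def)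

lemma sum_ind_equiv_half_card_E6: "sum_ind_equiv_half_card LambdaE6 root_le"
  unfolding LambdaE6_eq
  by (rule sum_ind_equiv_half_card_by_indexed_certificate[OF _ reflp_root_le transp_root_le
        antisymp_root_le, where LC = E6_lower_covers and C = E6_coefficients]) code_simp+

lemma LambdaE7_eq: "LambdaE7 = set E7_roots"
  by (simp add: LambdaE7_def E7_roots_def)

lemma sum_ind_equiv_half_card_E7: "sum_ind_equiv_half_card LambdaE7 root_le"
  unfolding LambdaE7_eq
  by (rule sum_ind_equiv_half_card_by_indexed_certificate[OF _ reflp_root_le transp_root_le
        antisymp_root_le, where LC = E7_lower_covers and C = E7_coefficients]) code_simp+

theorem theorem3p21:
  fixes P :: "'a set" and le :: "'a \<Rightarrow> 'a \<Rightarrow> bool"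
  assumes "minuscule_poset P le"
  shows "toggle_equiv P le (\<lambda>I. \<Sum>p\<in>P. ind p I) (\<lambda>I. real (card P) / 2)"
  using assms unfolding minuscule_poset_def
proof (elim disjE exE conjE)
  fix a b assume "1 \<le> a" "1 \<le> b" "isomorphic_posets P le (rect a b) prod_le"
  then show ?thesis
    using sum_ind_equiv_half_card_isomorphic grid_poset.finite_grid[OF grid_poset_rect]
      sum_ind_equiv_half_card_rect by blast
next
  fix n assume "1 \<le> n" "isomorphic_posets P le (staircase n) prod_le"
  then show ?thesis
    using sum_ind_equiv_half_card_isomorphic grid_poset.finite_grid[OF grid_poset_staircase]
      sum_ind_equiv_half_card_staircase by blast
next
  fix n assume "2 \<le> n" "isomorphic_posets P le (diamond n) diamond_le"
  then show ?thesis
    using sum_ind_equiv_half_card_isomorphic layered_poset.finite_layers[OF layered_poset_diamond]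
      sum_ind_equiv_half_card_diamond by blast
next
  assume "isomorphic_posets P le LambdaE6 root_le"
  then show ?thesis
    using sum_ind_equiv_half_card_isomorphic sum_ind_equiv_half_card_E6 finite_set[of E6_roots]
    unfolding LambdaE6_eq by blast
next
  assume "isomorphic_posets P le LambdaE7 root_le"
  then show ?thesis
    using sum_ind_equiv_half_card_isomorphic sum_ind_equiv_half_card_E7 finite_set[of E7_roots]
    unfolding LambdaE7_eq by blast
qed

end
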